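(* Let $f:\mathbb{R}^n\to\mathbb{R}$ be differentiable and pseudo-convex, with $\nabla f$ $L$-Lipschitz continuous, and assume the stationary set $X^*$ is non-empty. Let $\{x^k\},\{z^k\}$ be generated by Algorithm 2 (with $\nabla f(x^k)\ne0$ for all $k$). Then for every $x^*\in X^*$ and every $k$, $$\|x^{k+1}-x^*\|^2\le\|x^k-x^*\|^2-\kappa_2\|x^k-z^k\|^2,$$ where $\kappa_2=2\beta-1-\beta^2\nu^2>0$.
   Context: Pseudo-convex: $\nabla f$ pseudo-monotone, i.e. $\langle \nabla f(x),y-x\rangle\ge0\Rightarrow\langle\nabla f(y),y-x\rangle\ge0$ for all $x,y$. $X^*=\{x:\nabla f(x)=0\}$. Algorithm 2: parameters $0<\mu<\nu<1$, $0<\underline{h}<1\le\gamma_0^0\le\overline{h}$, $\theta\in(0,1)$, $\tau>1$, $\beta\in\left(\frac{1-\sqrt{1-\nu^2}}{\nu^2},1\right]$, starting point $x^0$. At iteration $k$: for $\gamma>0$ let $z^k(\gamma)=x^k-\gamma\nabla f(x^k)$ and $r_k(\gamma)=\gamma\|\nabla f(z^k(\gamma))-\nabla f(x^k)\|/\|z^k(\gamma)-x^k\|$; starting from $\gamma_0^k$, while $r_k(\gamma_l^k)>\nu$ set $\gamma_{l+1}^k=\gamma_l^k\theta\min\{1,1/r_k(\gamma_l^k)\}$; let $h_k$ be the first $\gamma_l^k$ with $r_k(\gamma_l^k)\le\nu$. Then $z^k=x^k-h_k\nabla f(x^k)$, $x^{k+1}=x^k-h_k\big(\nabla f(x^k)-\beta(\nabla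 f(x^k)-\nabla f(z^k))\big)$, and $\gamma_0^{k+1}=\mathbf{P}_{[\underline{h},\overline{h}]}(\tau h_k)$ if $r_k(h_k)\le\mu$, else $\gamma_0^{k+1}=\mathbf{P}_{[\underline{h},\overline{h}]}(h_k)$, where $\mathbf{P}_{[a,b]}$ is projection onto $[a,b]$. *)

theory Defs
  imports "HOL-Analysis.Analysis"
begin

definition is_gradient :: "('a::real_inner \<Rightarrow> real) \<Rightarrow> ('a \<Rightarrow> 'a) \<Rightarrow> bool" where
  "is_gradient f g \<longleftrightarrow> (\<forall>x. GDERIV f x :> g x)"

text \<open>Pseudo-convexity: the gradient is pseudo-monotone.\<close>
definition pseudo_monotone :: "('a::real_inner \<Rightarrow> 'a) \<Rightarrow> bool" where
  "pseudo_monotone g \<longleftrightarrow>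
     (\<forall>x y. inner (g x) (y - x) \<ge> 0 \<longrightarrow> inner (g y) (y - x) \<ge> 0)"

definition stationary_set :: "('a::real_inner \<Rightarrow> 'a) \<Rightarrow> 'a set" where
  "stationary_set g = {x. g x = 0}"

definition proj_interval :: "real \<Rightarrow> real \<Rightarrow> real \<Rightarrow> real" where
  "proj_interval a b t = max a (min b t)"

definition ratio :: "('a::real_normed_vector \<Rightarrow> 'a) \<Rightarrow> 'a \<Rightarrow> real \<Rightarrow> real" where
  "ratio g x \<gamma> = \<gamma> * norm (g (x - \<gamma> *\<^sub>R g x) - g x) / norm ((x - \<gamma> *\<^sub>R g x) - x)"

primrec trial :: "('a::real_normed_vector \<Rightarrow> 'a) \<Rightarrow> 'a \<Rightarrow> real \<Rightarrow> real \<Rightarrow> nat \<Rightarrow> real" where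
  "trial g x \<theta> \<gamma>0 0 = \<gamma>0"
| "trial g x \<theta> \<gamma>0 (Suc l) =
     trial g x \<theta> \<gamma>0 l * \<theta> * min 1 (1 / ratio g x (trial g x \<theta> \<gamma>0 l))"

definition first_accepted :: "('a::real_normed_vector \<Rightarrow> 'a) \<Rightarrow> 'a \<Rightarrow> real \<Rightarrow> real \<Rightarrow> real \<Rightarrow> real \<Rightarrow> bool" where
  "first_accepted g x \<theta> \<nu> \<gamma>0 h \<longleftrightarrow>
     (\<exists>l. h = trial g x \<theta> \<gamma>0 l \<and> ratio g x (trial g x \<theta> \<gamma>0 l) \<le> \<nu> \<and>
          (\<forall>j<l. ratio g x (trial g x \<theta> \<gamma>0 j) > \<nu>))"

definition algorithm2 ::
  "('a::real_normed_vector \<Rightarrow> 'a) \<Rightarrow> real \<Rightarrow> real \<Rightarrow> real \<Rightarrow> real \<Rightarrow> real \<Rightarrow> real \<Rightarrow> real \<Rightarrow>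
   (nat \<Rightarrow> 'a) \<Rightarrow> (nat \<Rightarrow> 'a) \<Rightarrow> (nat \<Rightarrow> real) \<Rightarrow> (nat \<Rightarrow> real) \<Rightarrow> bool" where
  "algorithm2 g \<mu> \<nu> hlo hhi \<theta> \<tau> \<beta> x z h \<gamma>0 \<longleftrightarrow>
     (\<forall>k. first_accepted g (x k) \<theta> \<nu> (\<gamma>0 k) (h k)
        \<and> z k = x k - h k *\<^sub>R g (x k)
        \<and> x (Suc k) = x k - h k *\<^sub>R (g (x k) - \<beta> *\<^sub>R (g (x k) - g (z k)))
        \<and> \<gamma>0 (Suc k) = (if ratio g (x k) (h k) \<le> \<mu>
                         then proj_interval hlo hhi (\<tau> * h k)
                         else proj_interval hlo hhi (h k)))"

end

theory Submission
  imports Defs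
begin

text \<open>
  Write \<open>u = h \<nabla>f(x)\<close> and \<open>v = h \<nabla>f(z)\<close>, so that \<open>z = x - u\<close> and
  \<open>x\<^sup>+ = x - (u + \<beta>(v - u))\<close>. Expanding \<open>\<parallel>x\<^sup>+ - x\<^sup>*\<parallel>\<^sup>2\<close> gives
  \<open>\<parallel>x - x\<^sup>*\<parallel>\<^sup>2 - 2(1-\<beta>)\<langle>u, x - x\<^sup>*\<rangle> - 2\<beta>\<langle>v, z - x\<^sup>*\<rangle> + (1-2\<beta>)\<parallel>u\<parallel>\<^sup>2 + \<beta>\<^sup>2\<parallel>v - u\<parallel>\<^sup>2\<close>.
  Since \<open>\<nabla>f(x\<^sup>*) = 0\<close>, pseudo-monotonicity makes both inner products nonnegative,
  and the acceptance test of the line search gives \<open>\<parallel>v - u\<parallel> \<le> \<nu>\<parallel>u\<parallel> = \<nu>\<parallel>x - z\<parallel>\<close>.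
  The constant \<open>\<kappa>\<^sub>2 = 2\<beta> - 1 - \<beta>\<^sup>2\<nu>\<^sup>2\<close> is positive exactly when \<open>\<beta>\<close> lies strictly between
  the roots \<open>(1 \<plusminus> sqrt (1 - \<nu>\<^sup>2)) / \<nu>\<^sup>2\<close>, and the upper root exceeds 1.
  The Lipschitz constant only guarantees that the line search terminates, which is
  built into the hypothesis that the step sizes were accepted.
\<close>

lemma kappa_pos:
  fixes \<nu> \<beta> :: real
  assumes "0 < \<nu>" "\<nu> < 1" "(1 - sqrt (1 - \<nu>\<^sup>2)) / \<nu>\<^sup>2 < \<beta>" "\<beta> \<le> 1"
  shows "0 < 2 * \<beta> - 1 - \<beta>\<^sup>2 * \<nu>\<^sup>2"
proof -
  define s where "s = sqrt (1 - \<nu>\<^sup>2)"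
  have \<nu>2: "0 < \<nu>\<^sup>2" "\<nu>\<^sup>2 < 1"
    using assms(1,2) by (auto simp: power_less_one_iff)
  then have s: "0 \<le> s" "s\<^sup>2 = 1 - \<nu>\<^sup>2"
    unfolding s_def by auto
  have above_lower_root: "0 < \<nu>\<^sup>2 * \<beta> - 1 + s"
    using assms(3) \<nu>2 unfolding s_def by (simp add: divide_less_eq algebra_simps)
  have below_upper_root: "\<nu>\<^sup>2 * \<beta> - 1 - s < 0"
    using assms(4) \<nu>2 s(1) mult_left_le[of \<beta> "\<nu>\<^sup>2"] by linarith
  have "(\<nu>\<^sup>2 * \<beta> - 1 - s) * (\<nu>\<^sup>2 * \<beta> - 1 + s) = - \<nu>\<^sup>2 * (2 * \<beta> - 1 - \<beta>\<^sup>2 * \<nu>\<^sup>2)"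
    using s(2) by (simp add: algebra_simps power2_eq_square)
  moreover have "(\<nu>\<^sup>2 * \<beta> - 1 - s) * (\<nu>\<^sup>2 * \<beta> - 1 + s) < 0"
    using above_lower_root below_upper_root by (simp add: mult_neg_pos)
  ultimately show ?thesis
    using \<nu>2 by (simp add: zero_less_mult_iff)
qed

lemma power2_norm_relaxed_step:
  fixes d u v :: "'a::real_inner"
  shows "(norm (d - (u + \<beta> *\<^sub>R (v - u))))\<^sup>2
    = (norm d)\<^sup>2 - 2 * (1 - \<beta>) * inner u d - 2 * \<beta> * inner v (d - u)
      + (1 - 2 * \<beta>) * (norm u)\<^sup>2 + \<beta>\<^sup>2 * (norm (v - u))\<^sup>2"
  unfolding power2_norm_eq_inner
  by (simp add: inner_diff_left inner_diff_right inner_add_left inner_add_right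
      inner_commute power2_eq_square algebra_simps)

lemma relaxed_extragradient_step_le:
  fixes x xs gx gz :: "'a::real_inner" and h \<beta> \<nu> :: real
  defines "z \<equiv> x - h *\<^sub>R gx"
  assumes "0 \<le> h" "0 \<le> \<beta>" "\<beta> \<le> 1"
    and "0 \<le> inner gx (x - xs)" "0 \<le> inner gz (z - xs)"
    and "h * norm (gz - gx) \<le> \<nu> * norm (x - z)"
  shows "(norm (x - h *\<^sub>R (gx - \<beta> *\<^sub>R (gx - gz)) - xs))\<^sup>2
    \<le> (norm (x - xs))\<^sup>2 - (2 * \<beta> - 1 - \<beta>\<^sup>2 * \<nu>\<^sup>2) * (norm (x - z))\<^sup>2"
proof -
  define d u v where "d = x - xs" and "u = h *\<^sub>R gx" and "v = h *\<^sub>R gz"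
  have x_minus_z: "x - z = u"
    unfolding z_def u_def by simp
  have step: "x - h *\<^sub>R (gx - \<beta> *\<^sub>R (gx - gz)) - xs = d - (u + \<beta> *\<^sub>R (v - u))"
    unfolding d_def u_def v_def by (simp add: algebra_simps)
  have "0 \<le> (1 - \<beta>) * inner u d"
    using assms unfolding u_def d_def by simp
  moreover have "d - u = z - xs"
    unfolding d_def u_def z_def by simp
  then have "0 \<le> \<beta> * inner v (d - u)"
    using assms unfolding v_def by simp
  moreover have "norm (v - u) \<le> \<nu> * norm u"
    using assms(7) \<open>0 \<le> h\<close> x_minus_z
    unfolding u_def v_def by (simp flip: scaleR_diff_right)
  then have "(norm (v - u))\<^sup>2 \<le> \<nu>\<^sup>2 * (norm u)\<^sup>2"
    by (metis norm_ge_zero power_mono power_mult_distrib)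
  then have "\<beta>\<^sup>2 * (norm (v - u))\<^sup>2 \<le> \<beta>\<^sup>2 * (\<nu>\<^sup>2 * (norm u)\<^sup>2)"
    by (simp add: mult_left_mono)
  ultimately show ?thesis
    unfolding step x_minus_z power2_norm_relaxed_step d_def
    by (simp add: algebra_simps)
qed

lemma pseudo_monotone_stationary:
  assumes "pseudo_monotone g" "xs \<in> stationary_set g"
  shows "0 \<le> inner (g y) (y - xs)"
proof -
  have "0 \<le> inner (g xs) (y - xs)"
    using assms(2) unfolding stationary_set_def by simp
  then show ?thesis
    using assms(1) unfolding pseudo_monotone_def by blast
qed

text \<open>If \<open>h \<nabla>f(x) = 0\<close> the ratio is \<open>0\<close> by division by zero, but then both sides vanish.\<close>

lemma ratio_le_imp_norm_diff_le:
  assumes "ratio g x h \<le> \<nu>"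
  shows "h * norm (g (x - h *\<^sub>R g x) - g x) \<le> \<nu> * norm (h *\<^sub>R g x)"
proof (cases "h *\<^sub>R g x = 0")
  case True
  then show ?thesis by auto
next
  case False
  then have "0 < norm (h *\<^sub>R g x)"
    by simp
  moreover have "h * norm (g (x - h *\<^sub>R g x) - g x) / norm (h *\<^sub>R g x) \<le> \<nu>"
    using assms unfolding ratio_def by simp
  ultimately show ?thesis
    by (simp add: pos_divide_le_eq mult.commute)
qed

lemma trial_nonneg:
  assumes "0 \<le> \<gamma>0" "0 < \<theta>"
  shows "0 \<le> trial g x \<theta> \<gamma>0 l"
  using assms by (induction l) (auto simp: ratio_def)

lemma first_accepted_nonneg:
  assumes "first_accepted g x \<theta> \<nu> \<gamma>0 h" "0 \<le> \<gamma>0" "0 < \<theta>"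
  shows "0 \<le> h"
  using assms trial_nonneg unfolding first_accepted_def by blast

lemma first_accepted_ratio_le:
  assumes "first_accepted g x \<theta> \<nu> \<gamma>0 h"
  shows "ratio g x h \<le> \<nu>"
  using assms unfolding first_accepted_def by blast

lemma proj_interval_ge_lower: "a \<le> proj_interval a b t"
  unfolding proj_interval_def by simp

lemma algorithm2_initial_trial_nonneg:
  assumes "algorithm2 g \<mu> \<nu> hlo hhi \<theta> \<tau> \<beta> x z h \<gamma>0" "0 \<le> hlo" "0 \<le> \<gamma>0 0"
  shows "0 \<le> \<gamma>0 k"
proof (cases k)
  case (Suc j)
  then have "hlo \<le> \<gamma>0 k"
    using assms(1) proj_interval_ge_lower unfolding algorithm2_def by simp
  then show ?thesis
    using assms(2) by linarith
qed (use assms in simp)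

lemma algorithm2_fejer:
  fixes g :: "'a::real_inner \<Rightarrow> 'a"
  assumes alg: "algorithm2 g \<mu> \<nu> hlo hhi \<theta> \<tau> \<beta> x z h \<gamma>0"
    and "0 \<le> hlo" "0 \<le> \<gamma>0 0" "0 < \<theta>" "0 \<le> \<beta>" "\<beta> \<le> 1"
    and pseudo: "pseudo_monotone g" and xs: "xs \<in> stationary_set g"
  shows "(norm (x (Suc k) - xs))\<^sup>2
    \<le> (norm (x k - xs))\<^sup>2 - (2 * \<beta> - 1 - \<beta>\<^sup>2 * \<nu>\<^sup>2) * (norm (x k - z k))\<^sup>2"
proof -
  have accepted: "first_accepted g (x k) \<theta> \<nu> (\<gamma>0 k) (h k)"
    and z: "z k = x k - h k *\<^sub>R g (x k)"
    and x: "x (Suc k) = x k - h k *\<^sub>R (g (x k) - \<beta> *\<^sub>R (g (x k) - g (z k)))"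
    using alg unfolding algorithm2_def by blast+
  have "0 \<le> h k"
    using accepted algorithm2_initial_trial_nonneg[OF alg] assms(2-4)
    by (blast intro: first_accepted_nonneg)
  moreover have "h k * norm (g (z k) - g (x k)) \<le> \<nu> * norm (x k - z k)"
    using ratio_le_imp_norm_diff_le[OF first_accepted_ratio_le[OF accepted]] z by simp
  moreover have "0 \<le> inner (g (x k)) (x k - xs)" "0 \<le> inner (g (z k)) (z k - xs)"
    using pseudo_monotone_stationary[OF pseudo xs] by blast+
  ultimately show ?thesis
    unfolding x using relaxed_extragradient_step_le[of "h k"] z assms(5,6) by simp
qed

theorem proposition2:
  fixes f :: "real ^ 'n \<Rightarrow> real" and g :: "real ^ 'n \<Rightarrow> real ^ 'n"
    and L \<mu> \<nu> hlo hhi \<theta> \<tau> \<beta> :: real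
    and x z :: "nat \<Rightarrow> real ^ 'n" and h \<gamma>0 :: "nat \<Rightarrow> real"
  assumes grad: "is_gradient f g"
    and pseudo: "pseudo_monotone g"
    and lip: "L-lipschitz_on UNIV g"
    and nonempty: "stationary_set g \<noteq> {}"
    and mu_nu: "0 < \<mu>" "\<mu> < \<nu>" "\<nu> < 1"
    and h_bounds: "0 < hlo" "hlo < 1" "1 \<le> \<gamma>0 0" "\<gamma>0 0 \<le> hhi"
    and theta: "0 < \<theta>" "\<theta> < 1"
    and tau: "1 < \<tau>"
    and beta: "(1 - sqrt (1 - \<nu>\<^sup>2)) / \<nu>\<^sup>2 < \<beta>" "\<beta> \<le> 1"
    and alg: "algorithm2 g \<mu> \<nu> hlo hhi \<theta> \<tau> \<beta> x z h \<gamma>0"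
    and nonstat: "\<forall>k. g (x k) \<noteq> 0"
  shows "2 * \<beta> - 1 - \<beta>\<^sup>2 * \<nu>\<^sup>2 > 0 \<and>
         (\<forall>xs \<in> stationary_set g. \<forall>k.
            (norm (x (Suc k) - xs))\<^sup>2
              \<le> (norm (x k - xs))\<^sup>2 - (2 * \<beta> - 1 - \<beta>\<^sup>2 * \<nu>\<^sup>2) * (norm (x k - z k))\<^sup>2)"
proof -
  have "0 < \<nu>"
    using mu_nu by linarith
  then have kappa: "0 < 2 * \<beta> - 1 - \<beta>\<^sup>2 * \<nu>\<^sup>2"
    using kappa_pos mu_nu(3) beta by blast
  moreover have "0 \<le> \<beta>\<^sup>2 * \<nu>\<^sup>2"
    by simp
  ultimately have "0 \<le> \<beta>"
    by linarith
  then show ?thesis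
    using kappa algorithm2_fejer[OF alg] pseudo h_bounds theta beta by auto
qed

end
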